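(* Assume that $I\subset J\hat{J}$. Then the natural reduction homomorphism $\pi_I:\Gamma(J,\hat{J})\to\overline{\Gamma}_I(J,\hat{J})$ is surjective.
   Context: $F$ is a totally real number field with ring of integers $R$; $J,\hat J\subset F$ are fractional ideals with $J\hat J\subset R$, and $I\subset R$ is a non-zero ideal. $\Gamma(J,\hat J)$ is the group of matrices $\begin{pmatrix} a_{11} & a_{12}\\ a_{21} & a_{22}\end{pmatrix}\in\operatorname{SL}_2(F)$ with $a_{11},a_{22}\in R$, $a_{12}\in J$, $a_{21}\in\hat J$. $\overline{\Gamma}_I(J,\hat J)$ is the group of matrices $\begin{pmatrix} \bar a_{11} & \bar a_{12}\\ \bar a_{21} & \bar a_{22}\end{pmatrix}$ with $\bar a_{11},\bar a_{22}\in R/I$, $\bar a_{12}\in J/IJ$, $\bar a_{21}\in\hat J/I\hat J$ and $\bar a_{11}\bar a_{22}-\bar a_{12}\bar a_{21}=1$ (using the map $J/IJ\otimes\hat J/I\hat J\to R/I$ induced by multiplication). *)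

theory Defs
  imports Complex_Main "HOL-Computational_Algebra.Polynomial"
begin

definition number_field :: "'a::field_char_0 itself \<Rightarrow> bool" where
  "number_field _ \<longleftrightarrow>
     (\<exists>B::'a list. \<forall>x::'a. \<exists>c::nat \<Rightarrow> rat. x = (\<Sum>i<length B. of_rat (c i) * B ! i))"

definition totally_real :: "'a::field_char_0 itself \<Rightarrow> bool" where
  "totally_real _ \<longleftrightarrow>
     (\<forall>\<sigma>::'a \<Rightarrow> complex.
        (\<sigma> 1 = 1 \<and> (\<forall>x y. \<sigma> (x + y) = \<sigma> x + \<sigma> y) \<and> (\<forall>x y. \<sigma> (x * y) = \<sigma> x * \<sigma> y))
        \<longrightarrow> (\<forall>x. \<sigma> x \<in> \<real>))"

definition ring_of_integers :: "'a::field_char_0 set" where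
  "ring_of_integers = {x. \<exists>p::int poly. lead_coeff p = 1 \<and> poly (map_poly of_int p) x = 0}"

definition ideal_prod :: "'a::field set \<Rightarrow> 'a set \<Rightarrow> 'a set" where
  "ideal_prod A B = {x. \<exists>(n::nat) a b. (\<forall>i<n. a i \<in> A \<and> b i \<in> B) \<and> x = (\<Sum>i<n. a i * b i)}"

definition frac_ideal :: "'a::field_char_0 set \<Rightarrow> bool" where
  "frac_ideal J \<longleftrightarrow> 0 \<in> J \<and> (\<forall>x\<in>J. \<forall>y\<in>J. x + y \<in> J)
     \<and> (\<forall>r\<in>ring_of_integers. \<forall>x\<in>J. r * x \<in> J)
     \<and> (\<exists>d\<in>ring_of_integers. d \<noteq> 0 \<and> (\<forall>x\<in>J. d * x \<in> ring_of_integers))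
     \<and> J \<noteq> {0}"

definition nz_ideal :: "'a::field_char_0 set \<Rightarrow> bool" where
  "nz_ideal I \<longleftrightarrow> I \<subseteq> ring_of_integers \<and> 0 \<in> I \<and> (\<forall>x\<in>I. \<forall>y\<in>I. x + y \<in> I)
     \<and> (\<forall>r\<in>ring_of_integers. \<forall>x\<in>I. r * x \<in> I) \<and> I \<noteq> {0}"

text \<open>Matrices (a11, a12, a21, a22).\<close>
type_synonym 'a mat2 = "'a \<times> 'a \<times> 'a \<times> 'a"

definition Gamma :: "'a::field_char_0 set \<Rightarrow> 'a set \<Rightarrow> 'a mat2 set" where
  "Gamma J Jh = {(a11, a12, a21, a22). a11 \<in> ring_of_integers \<and> a22 \<in> ring_of_integers
      \<and> a12 \<in> J \<and> a21 \<in> Jh \<and> a11 * a22 - a12 * a21 = 1}"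

text \<open>Representatives of elements of Gamma-bar_I(J,Jh): entries in R, J, Jh, R whose
  classes in R/I, J/IJ, Jh/IJh, R/I satisfy the determinant condition mod I.\<close>
definition Gammabar_reps :: "'a::field_char_0 set \<Rightarrow> 'a set \<Rightarrow> 'a set \<Rightarrow> 'a mat2 set" where
  "Gammabar_reps I J Jh = {(b11, b12, b21, b22). b11 \<in> ring_of_integers \<and> b22 \<in> ring_of_integers
      \<and> b12 \<in> J \<and> b21 \<in> Jh \<and> b11 * b22 - b12 * b21 - 1 \<in> I}"

text \<open>Two representatives define the same element of Gamma-bar_I(J,Jh).\<close>
definition red_eq :: "'a::field_char_0 set \<Rightarrow> 'a set \<Rightarrow> 'a set \<Rightarrow> 'a mat2 \<Rightarrow> 'a mat2 \<Rightarrow> bool" where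
  "red_eq I J Jh A B \<longleftrightarrow> (case A of (a11, a12, a21, a22) \<Rightarrow> case B of (b11, b12, b21, b22) \<Rightarrow>
      a11 - b11 \<in> I \<and> a12 - b12 \<in> ideal_prod I J \<and> a21 - b21 \<in> ideal_prod I Jh \<and> a22 - b22 \<in> I)"

end

theory Submission
  imports Defs "Jordan_Normal_Form.Char_Poly"
begin

text \<open>
  First move the lower left entry to some \<open>c \<noteq> 0\<close> in its class modulo \<open>IJh\<close>. Then
  \<open>K = cJ\<close> is a non-zero ideal of \<open>R\<close>, and \<open>R/K\<close> behaves like a finite ring: every power
  sequence of an element of \<open>R\<close> is eventually periodic modulo \<open>K\<close>, because \<open>K\<close> contains a
  non-zero rational integer. Such rings have stable rank one, so \<open>b\<^sub>1\<^sub>1\<close> can be changed by a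
  multiple of \<open>b\<^sub>1\<^sub>1b\<^sub>2\<^sub>2 - cb\<^sub>1\<^sub>2 - 1 \<in> I\<close> into some \<open>a\<^sub>1\<^sub>1\<close> that is invertible modulo
  \<open>cJ\<close>, i.e. \<open>a\<^sub>1\<^sub>1u - cv = 1\<close> with \<open>u \<in> R\<close>, \<open>v \<in> J\<close>. The unimodular first column
  \<open>(a\<^sub>1\<^sub>1, c)\<close> is completed to a matrix of \<open>\<Gamma>(J,Jh)\<close> whose second column is congruent to
  \<open>(b\<^sub>1\<^sub>2, b\<^sub>2\<^sub>2)\<close>.
\<close>

section \<open>The algebraic integers form a ring\<close>

definition int_span :: "'a::field_char_0 list \<Rightarrow> 'a set" where
  "int_span ws = {s. \<exists>c::nat \<Rightarrow> int. s = (\<Sum>k<length ws. of_int (c k) * ws ! k)}"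

lemma int_span_0: "0 \<in> int_span ws"
  unfolding int_span_def by (auto intro: exI[of _ "\<lambda>_. 0"])

lemma int_span_add:
  assumes "a \<in> int_span ws" "b \<in> int_span ws"
  shows "a + b \<in> int_span ws"
proof -
  obtain c d where "a = (\<Sum>k<length ws. of_int (c k) * ws ! k)"
    and "b = (\<Sum>k<length ws. of_int (d k) * ws ! k)"
    using assms unfolding int_span_def by blast
  then have "a + b = (\<Sum>k<length ws. of_int (c k + d k) * ws ! k)"
    by (simp add: sum.distrib distrib_right)
  then show ?thesis unfolding int_span_def mem_Collect_eq by (rule exI[of _ "\<lambda>k. c k + d k"])
qed

lemma int_span_of_int_mult:
  assumes "a \<in> int_span ws"
  shows "of_int z * a \<in> int_span ws"
proof -
  obtain c where "a = (\<Sum>k<length ws. of_int (c k) * ws ! k)"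
    using assms unfolding int_span_def by blast
  then have "of_int z * a = (\<Sum>k<length ws. of_int (z * c k) * ws ! k)"
    by (simp add: sum_distrib_left mult.assoc)
  then show ?thesis unfolding int_span_def mem_Collect_eq by (rule exI[of _ "\<lambda>k. z * c k"])
qed

lemma int_span_sum:
  "finite A \<Longrightarrow> (\<And>a. a \<in> A \<Longrightarrow> f a \<in> int_span ws) \<Longrightarrow> sum f A \<in> int_span ws"
  by (induction A rule: finite_induct) (auto intro: int_span_0 int_span_add)

lemma int_span_generator: "w \<in> set ws \<Longrightarrow> w \<in> int_span ws"
proof -
  assume "w \<in> set ws"
  then obtain i where i: "i < length ws" "w = ws ! i" by (auto simp: in_set_conv_nth)
  have "(\<Sum>k<length ws. of_int (if k = i then 1 else 0) * ws ! k)
      = (\<Sum>k<length ws. if k = i then ws ! k else 0)"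
    by (rule sum.cong) auto
  also have "\<dots> = ws ! i"
    using i(1) by (simp add: sum.delta)
  finally have "(\<Sum>k<length ws. of_int (if k = i then 1 else 0) * ws ! k) = ws ! i" .
  then show ?thesis
    unfolding int_span_def i(2) by (auto intro!: exI[of _ "\<lambda>k. if k = i then 1 else 0"])
qed

lemma int_span_mult_closed:
  assumes "\<forall>w\<in>set ws. y * w \<in> int_span ws" and "s \<in> int_span ws"
  shows "y * s \<in> int_span ws"
proof -
  obtain c where s: "s = (\<Sum>k<length ws. of_int (c k) * ws ! k)"
    using assms(2) unfolding int_span_def by blast
  have "y * s = (\<Sum>k<length ws. of_int (c k) * (y * ws ! k))"
    unfolding s by (simp add: sum_distrib_left algebra_simps)
  also have "\<dots> \<in> int_span ws"
    using assms(1) by (intro int_span_sum int_span_of_int_mult) auto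
  finally show ?thesis .
qed

text \<open>The determinant trick: \<open>x\<close> is an eigenvalue of an integer matrix.\<close>

lemma int_span_stable_imp_ring_of_integers:
  fixes x :: "'a::field_char_0"
  assumes stable: "\<forall>w\<in>set ws. x * w \<in> int_span ws" and nonzero: "\<exists>w\<in>set ws. w \<noteq> 0"
  shows "x \<in> ring_of_integers"
proof -
  define n where "n = length ws"
  have "\<forall>i. \<exists>c::nat \<Rightarrow> int. i < n \<longrightarrow> x * ws ! i = (\<Sum>k<n. of_int (c k) * ws ! k)"
    using stable nth_mem unfolding n_def int_span_def by blast
  from choice[OF this] obtain C
    where C: "\<forall>i<n. x * ws ! i = (\<Sum>k<n. of_int (C i k) * ws ! k)"
    by blast
  define A :: "int mat" where "A = mat n n (\<lambda>(i, k). C i k)"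
  define A' :: "'a mat" where "A' = map_mat of_int A"
  define v where "v = vec_of_list ws"
  have A: "A \<in> carrier_mat n n" unfolding A_def by simp
  have A': "A' \<in> carrier_mat n n" unfolding A'_def using A by simp
  have dim_v: "dim_vec v = n" unfolding v_def n_def by simp
  have rows: "dim_row A' = n" using A' by (rule carrier_matD)
  have v_nth: "\<And>i. v $ i = ws ! i" unfolding v_def by (rule vec_of_list_index)
  have "A' *\<^sub>v v = x \<cdot>\<^sub>v v"
  proof (rule eq_vecI)
    fix i assume "i < dim_vec (x \<cdot>\<^sub>v v)"
    then have i: "i < n" using dim_v by simp
    have "(A' *\<^sub>v v) $ i = row A' i \<bullet> v" using i A' by simp
    also have "\<dots> = (\<Sum>k\<in>{0..<n}. row A' i $ k * v $ k)"
      unfolding scalar_prod_def dim_v ..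
    also have "\<dots> = (\<Sum>k<n. of_int (C i k) * ws ! k)"
      unfolding atLeast0LessThan
    proof (rule sum.cong)
      fix k assume "k \<in> {..<n}"
      then have "row A' i $ k = of_int (C i k)"
        using i unfolding A'_def A_def by simp
      then show "row A' i $ k * v $ k = of_int (C i k) * ws ! k" using v_nth by simp
    qed simp
    also have "\<dots> = (x \<cdot>\<^sub>v v) $ i" using C i dim_v v_nth by simp
    finally show "(A' *\<^sub>v v) $ i = (x \<cdot>\<^sub>v v) $ i" .
  qed (use dim_v A' in auto)
  moreover have "v \<in> carrier_vec (dim_row A')"
    unfolding rows by (rule carrier_vecI[OF dim_v])
  moreover have "v \<noteq> 0\<^sub>v (dim_row A')"
  proof
    assume "v = 0\<^sub>v (dim_row A')"
    then have "ws ! i = 0" if "i < n" for i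
      using v_nth[of i] that rows by simp
    then show False using nonzero by (auto simp: in_set_conv_nth n_def)
  qed
  ultimately have "eigenvalue A' x" unfolding eigenvalue_def eigenvector_def by blast
  then have "poly (char_poly A') x = 0" using eigenvalue_root_char_poly[OF A'] by simp
  moreover have "char_poly A' = map_poly of_int (char_poly A)"
    unfolding A'_def by (rule of_int_hom.char_poly_hom[OF A])
  moreover have "lead_coeff (char_poly A) = 1" using degree_monic_char_poly[OF A] by simp
  ultimately show ?thesis unfolding ring_of_integers_def by auto
qed

lemma poly_of_int_poly_altdef:
  "poly (map_poly of_int p) x = (\<Sum>i\<le>degree p. of_int (coeff p i) * (x :: 'a::field_char_0) ^ i)"
  by (simp add: poly_altdef degree_map_poly coeff_map_poly)

lemma powers_in_int_span:
  fixes x :: "'a::field_char_0"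
  assumes "x \<in> ring_of_integers"
  obtains n where "n \<ge> 1" "\<And>k. x ^ k \<in> int_span (map (\<lambda>i. x ^ i) [0..<n])"
proof -
  obtain p :: "int poly" where monic: "lead_coeff p = 1" and root: "poly (map_poly of_int p) x = 0"
    using assms unfolding ring_of_integers_def by blast
  define n where "n = degree p"
  define ws where "ws = map (\<lambda>i. x ^ i) [0..<n]"
  have "0 = (\<Sum>i\<le>n. of_int (coeff p i) * x ^ i)"
    using root unfolding poly_of_int_poly_altdef n_def by simp
  also have "\<dots> = (\<Sum>i<n. of_int (coeff p i) * x ^ i) + x ^ n"
    using monic unfolding n_def by (simp flip: lessThan_Suc_atMost)
  finally have xn: "x ^ n = of_int (-1) * (\<Sum>i<n. of_int (coeff p i) * x ^ i)"
    by (simp add: eq_neg_iff_add_eq_0 add.commute)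
  then have "n \<ge> 1" by (cases n) auto
  have low: "i < n \<Longrightarrow> x ^ i \<in> int_span ws" for i
    by (rule int_span_generator) (simp add: ws_def)
  have "x ^ n \<in> int_span ws"
    unfolding xn by (intro int_span_of_int_mult int_span_sum low) auto
  have stable: "\<forall>w\<in>set ws. x * w \<in> int_span ws"
  proof
    fix w assume "w \<in> set ws"
    then obtain i where "i < n" and w: "x * w = x ^ Suc i" unfolding ws_def by auto
    show "x * w \<in> int_span ws"
    proof (cases "Suc i < n")
      case True
      then show ?thesis unfolding w by (rule low)
    next
      case False
      then have "Suc i = n" using \<open>i < n\<close> by simp
      then show ?thesis unfolding w using \<open>x ^ n \<in> int_span ws\<close> by simp
    qed
  qed
  have "x ^ k \<in> int_span ws" for k
  proof (induction k)
    case 0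
    then show ?case using low[of 0] \<open>n \<ge> 1\<close> by simp
  next
    case (Suc k)
    then show ?case using int_span_mult_closed[OF stable] by simp
  qed
  with \<open>n \<ge> 1\<close> show ?thesis using that unfolding ws_def by blast
qed

lemma ring_of_integers_add_mult:
  fixes x y :: "'a::field_char_0"
  assumes x: "x \<in> ring_of_integers" and y: "y \<in> ring_of_integers"
  shows "x + y \<in> ring_of_integers" "x * y \<in> ring_of_integers"
proof -
  obtain n where "n \<ge> 1" and x_pow: "\<And>k. x ^ k \<in> int_span (map (\<lambda>i. x ^ i) [0..<n])"
    using powers_in_int_span[OF x] by blast
  obtain m where "m \<ge> 1" and y_pow: "\<And>l. y ^ l \<in> int_span (map (\<lambda>j. y ^ j) [0..<m])"
    using powers_in_int_span[OF y] by blast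
  define ws where "ws = concat (map (\<lambda>i. map (\<lambda>j. x ^ i * y ^ j) [0..<m]) [0..<n])"
  have ws_elem: "i < n \<Longrightarrow> j < m \<Longrightarrow> x ^ i * y ^ j \<in> set ws" for i j
    unfolding ws_def by (auto intro!: bexI[of _ i])
  have monomials: "x ^ k * y ^ l \<in> int_span ws" for k l
  proof -
    obtain c where c: "x ^ k = (\<Sum>i<n. of_int (c i) * x ^ i)"
      using x_pow[of k] unfolding int_span_def by auto
    obtain d where d: "y ^ l = (\<Sum>j<m. of_int (d j) * y ^ j)"
      using y_pow[of l] unfolding int_span_def by auto
    have "x ^ k * y ^ l = (\<Sum>i<n. \<Sum>j<m. of_int (c i) * x ^ i * (of_int (d j) * y ^ j))"
      unfolding c d by (rule sum_product)
    also have "\<dots> = (\<Sum>i<n. \<Sum>j<m. of_int (c i * d j) * (x ^ i * y ^ j))"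
      by (simp add: algebra_simps)
    also have "\<dots> \<in> int_span ws"
      by (intro int_span_sum int_span_of_int_mult int_span_generator ws_elem) auto
    finally show ?thesis .
  qed
  have ws_monomial: "w \<in> set ws \<Longrightarrow> \<exists>i j. w = x ^ i * y ^ j" for w
    unfolding ws_def by auto
  have "1 \<in> set ws"
    using ws_elem[of 0 0] \<open>n \<ge> 1\<close> \<open>m \<ge> 1\<close> by simp
  then have one: "\<exists>w\<in>set ws. w \<noteq> 0"
    using one_neq_zero by blast
  show "x + y \<in> ring_of_integers"
  proof (rule int_span_stable_imp_ring_of_integers[OF ballI one])
    fix w assume "w \<in> set ws"
    then obtain i j where w: "w = x ^ i * y ^ j" using ws_monomial by blast
    have "(x + y) * w = x ^ Suc i * y ^ j + x ^ i * y ^ Suc j"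
      unfolding w by (simp add: algebra_simps)
    then show "(x + y) * w \<in> int_span ws"
      by (simp only: int_span_add monomials)
  qed
  show "x * y \<in> ring_of_integers"
  proof (rule int_span_stable_imp_ring_of_integers[OF ballI one])
    fix w assume "w \<in> set ws"
    then obtain i j where w: "w = x ^ i * y ^ j" using ws_monomial by blast
    have "(x * y) * w = x ^ Suc i * y ^ Suc j"
      unfolding w by (simp add: algebra_simps)
    then show "(x * y) * w \<in> int_span ws"
      by (simp only: monomials)
  qed
qed

lemma ring_of_integers_of_int: "(of_int z :: 'a::field_char_0) \<in> ring_of_integers"
  unfolding ring_of_integers_def
  by (intro CollectI exI[of _ "[:-z, 1:]"]) (simp add: map_poly_pCons)

lemma ring_of_integers_0: "0 \<in> ring_of_integers"
  and ring_of_integers_1: "1 \<in> ring_of_integers"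
  using ring_of_integers_of_int[of 0] ring_of_integers_of_int[of 1] by simp_all

lemma ring_of_integers_uminus: "x \<in> ring_of_integers \<Longrightarrow> - x \<in> ring_of_integers"
  using ring_of_integers_add_mult(2)[OF ring_of_integers_of_int[of "-1"]] by simp

lemma ring_of_integers_diff:
  "x \<in> ring_of_integers \<Longrightarrow> y \<in> ring_of_integers \<Longrightarrow> x - y \<in> ring_of_integers"
  using ring_of_integers_add_mult(1)[OF _ ring_of_integers_uminus] by simp

lemma ring_of_integers_power: "x \<in> ring_of_integers \<Longrightarrow> x ^ n \<in> ring_of_integers"
  by (induction n) (auto intro: ring_of_integers_add_mult ring_of_integers_1)

lemma ring_of_integers_sum:
  "finite A \<Longrightarrow> (\<And>i. i \<in> A \<Longrightarrow> f i \<in> ring_of_integers) \<Longrightarrow> sum f A \<in> ring_of_integers"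
  by (induction A rule: finite_induct) (auto intro: ring_of_integers_0 ring_of_integers_add_mult)

lemmas ring_of_integers_intros =
  ring_of_integers_add_mult ring_of_integers_diff ring_of_integers_uminus ring_of_integers_power
  ring_of_integers_0 ring_of_integers_1 ring_of_integers_of_int

section \<open>Ideals of the ring of integers\<close>

definition integral_ideal :: "'a::field_char_0 set \<Rightarrow> bool" where
  "integral_ideal K \<longleftrightarrow> K \<subseteq> ring_of_integers \<and> 0 \<in> K \<and> (\<forall>a\<in>K. \<forall>b\<in>K. a + b \<in> K)
     \<and> (\<forall>r\<in>ring_of_integers. \<forall>a\<in>K. r * a \<in> K)"

lemma nz_ideal_iff: "nz_ideal I \<longleftrightarrow> integral_ideal I \<and> I \<noteq> {0}"
  unfolding nz_ideal_def integral_ideal_def by blast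

context
  fixes K :: "'a::field_char_0 set"
  assumes K: "integral_ideal K"
begin

lemma integral_ideal_subset: "a \<in> K \<Longrightarrow> a \<in> ring_of_integers"
  and integral_ideal_0: "0 \<in> K"
  and integral_ideal_add: "a \<in> K \<Longrightarrow> b \<in> K \<Longrightarrow> a + b \<in> K"
  and integral_ideal_mult_left: "r \<in> ring_of_integers \<Longrightarrow> a \<in> K \<Longrightarrow> r * a \<in> K"
  using K unfolding integral_ideal_def by blast+

lemma integral_ideal_mult_right: "a \<in> K \<Longrightarrow> r \<in> ring_of_integers \<Longrightarrow> a * r \<in> K"
  by (metis integral_ideal_mult_left mult.commute)

lemma integral_ideal_uminus: "a \<in> K \<Longrightarrow> - a \<in> K"
  using integral_ideal_mult_left[OF ring_of_integers_of_int[of "-1"]] by simp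

lemma integral_ideal_diff: "a \<in> K \<Longrightarrow> b \<in> K \<Longrightarrow> a - b \<in> K"
  using integral_ideal_add[OF _ integral_ideal_uminus] by simp

lemma integral_ideal_sum: "finite A \<Longrightarrow> (\<And>i. i \<in> A \<Longrightarrow> f i \<in> K) \<Longrightarrow> sum f A \<in> K"
  by (induction A rule: finite_induct) (auto intro: integral_ideal_0 integral_ideal_add)

lemma integral_ideal_contains_nonzero_int:
  assumes z: "z \<in> K" "z \<noteq> 0"
  obtains N :: int where "N \<noteq> 0" "of_int N \<in> K"
proof -
  obtain p :: "int poly" where "lead_coeff p = 1" and p_root: "poly (map_poly of_int p) z = 0"
    using integral_ideal_subset[OF z(1)] unfolding ring_of_integers_def by blast
  then have "p \<noteq> 0" by auto
  from order_decomp[OF this, of 0] obtain q where pq: "p = [:0, 1:] ^ order 0 p * q"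
    and "\<not> [:0, 1:] dvd q" by auto
  then have q0: "coeff q 0 \<noteq> 0"
    using poly_eq_0_iff_dvd[of q 0] by (simp add: poly_0_coeff_0)
  interpret of_int_poly: map_poly_comm_ring_hom "of_int :: int \<Rightarrow> 'a" ..
  have "poly (map_poly of_int p) z = z ^ order 0 p * poly (map_poly of_int q) z"
    by (subst pq) (simp add: hom_distribs)
  then have "0 = poly (map_poly (of_int :: int \<Rightarrow> 'a) q) z"
    using p_root z(2) by simp
  also have "\<dots> = of_int (coeff q 0) + (\<Sum>i<degree q. of_int (coeff q (Suc i)) * z ^ Suc i)"
    unfolding poly_of_int_poly_altdef by (simp add: sum.atMost_shift)
  finally have "of_int (coeff q 0) = - (\<Sum>i<degree q. of_int (coeff q (Suc i)) * z ^ Suc i)"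
    by (simp add: eq_neg_iff_add_eq_0)
  also have "\<dots> \<in> K"
  proof (intro integral_ideal_uminus integral_ideal_sum)
    fix i
    have "z ^ Suc i = z ^ i * z" by simp
    also have "\<dots> \<in> K"
      using integral_ideal_subset[OF z(1)] z(1)
      by (intro integral_ideal_mult_left ring_of_integers_power)
    finally show "of_int (coeff q (Suc i)) * z ^ Suc i \<in> K"
      by (intro integral_ideal_mult_left ring_of_integers_of_int)
  qed simp
  finally show ?thesis using q0 that by blast
qed

text \<open>Pigeonhole on the coefficients, modulo a non-zero integer \<open>N \<in> K\<close>, of the powers of \<open>x\<close>
  in the basis \<open>1, x, \<dots>, x\<^sup>n\<^sup>-\<^sup>1\<close>.\<close>

lemma powers_eventually_periodic_mod:
  assumes "K \<noteq> {0}" and x: "x \<in> ring_of_integers"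
  obtains k p where "k \<ge> 1" "p \<ge> 1" "x ^ (k + p) - x ^ k \<in> K"
proof -
  obtain z where z: "z \<in> K" "z \<noteq> 0" using assms(1) integral_ideal_0 by blast
  obtain N :: int where "N \<noteq> 0" and N: "of_int N \<in> K"
    using integral_ideal_contains_nonzero_int[OF z] by blast
  define M where "M = \<bar>N\<bar>"
  have "M > 0" using \<open>N \<noteq> 0\<close> unfolding M_def by simp
  obtain n where x_pow: "\<And>k. x ^ k \<in> int_span (map (\<lambda>i. x ^ i) [0..<n])"
    using powers_in_int_span[OF x] by blast
  then have "\<forall>k. \<exists>c::nat \<Rightarrow> int. x ^ k = (\<Sum>i<n. of_int (c i) * x ^ i)"
    unfolding int_span_def by auto
  then obtain C where C: "\<And>k. x ^ k = (\<Sum>i<n. of_int (C k i) * x ^ i)" by metis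
  define residues where "residues k = map (\<lambda>i. C (Suc k) i mod M) [0..<n]" for k
  have "range residues \<subseteq> {xs. set xs \<subseteq> {0..<M} \<and> length xs = n}"
    unfolding residues_def using \<open>M > 0\<close> by auto
  then have "finite (range residues)"
    by (rule finite_subset) (simp add: finite_lists_length_eq)
  then have "\<not> inj residues"
    using finite_imageD infinite_UNIV_nat by blast
  then obtain a b where "a < b" and same: "residues a = residues b"
    unfolding inj_def by (metis linorder_neq_iff)
  have dvd: "N dvd C (Suc b) i - C (Suc a) i" if "i < n" for i
  proof -
    have "C (Suc b) i mod M = C (Suc a) i mod M"
      using arg_cong[OF same, of "\<lambda>xs. xs ! i"] that unfolding residues_def by simp
    then show ?thesis unfolding M_def by (metis abs_dvd_iff mod_eq_dvd_iff)
  qed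
  define d where "d i = C (Suc b) i - C (Suc a) i" for i
  have "x ^ Suc b - x ^ Suc a = (\<Sum>i<n. of_int (d i) * x ^ i)"
    using C[of "Suc b"] C[of "Suc a"] unfolding d_def by (simp add: sum_subtractf algebra_simps)
  also have "\<dots> = (\<Sum>i<n. of_int (d i div N) * (of_int N * x ^ i))"
  proof (rule sum.cong)
    fix i assume "i \<in> {..<n}"
    then have "d i = d i div N * N" using dvd unfolding d_def by simp
    then show "of_int (d i) * x ^ i = of_int (d i div N) * (of_int N * x ^ i)"
      by (metis mult.assoc of_int_mult)
  qed simp
  also have "\<dots> \<in> K"
  proof (rule integral_ideal_sum)
    fix i
    show "of_int (d i div N) * (of_int N * x ^ i) \<in> K"
      using integral_ideal_mult_right[OF N ring_of_integers_power[OF x]]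
      by (rule integral_ideal_mult_left[OF ring_of_integers_of_int])
  qed simp
  finally show ?thesis using \<open>a < b\<close> that[of "Suc a" "b - a"] by simp
qed

lemma power_idempotent_mod:
  assumes "K \<noteq> {0}" and x: "x \<in> ring_of_integers"
  obtains m where "m \<ge> 1" "x ^ m * x ^ m - x ^ m \<in> K"
proof -
  obtain k p where "k \<ge> 1" "p \<ge> 1" and period: "x ^ (k + p) - x ^ k \<in> K"
    using powers_eventually_periodic_mod[OF assms] by blast
  have shift: "x ^ (j + p) - x ^ j \<in> K" if "j \<ge> k" for j
  proof -
    have "x ^ (j + p) - x ^ j = x ^ (j - k) * (x ^ (k + p) - x ^ k)"
      using that by (simp add: algebra_simps flip: power_add)
    then show ?thesis
      using integral_ideal_mult_left[OF ring_of_integers_power[OF x] period] by simp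
  qed
  have iterate: "x ^ (j + q * p) - x ^ j \<in> K" if "j \<ge> k" for j q
  proof (induction q)
    case 0
    then show ?case using integral_ideal_0 by simp
  next
    case (Suc q)
    have "x ^ (j + Suc q * p) - x ^ j
        = (x ^ (j + q * p + p) - x ^ (j + q * p)) + (x ^ (j + q * p) - x ^ j)"
      by (simp add: algebra_simps)
    also have "\<dots> \<in> K"
      using that by (intro integral_ideal_add[OF shift Suc]) simp
    finally show ?case .
  qed
  have "x ^ (k * p) * x ^ (k * p) - x ^ (k * p) \<in> K"
    using iterate[of "k * p" k] \<open>p \<ge> 1\<close> by (simp add: mult.commute flip: power_add)
  moreover have "k * p \<ge> 1" using \<open>k \<ge> 1\<close> \<open>p \<ge> 1\<close> by simp
  ultimately show ?thesis using that by blast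
qed

lemma one_plus_nilpotent_invertible_mod:
  assumes "n ^ m \<in> K"
  shows "(1 + n) * (\<Sum>i<m. (- n) ^ i) - 1 \<in> K"
proof -
  have "(1 + n) * (\<Sum>i<m. (- n) ^ i) = 1 - (- n) ^ m"
    using one_diff_power_eq[of "- n" m] by (simp only: diff_minus_eq_add)
  then have "(1 + n) * (\<Sum>i<m. (- n) ^ i) - 1 = - ((- n) ^ m)"
    by simp
  also have "\<dots> = - ((- 1) ^ m * n ^ m)"
    by (subst power_minus) (rule refl)
  also have "\<dots> \<in> K"
    using assms by (intro integral_ideal_uminus integral_ideal_mult_left ring_of_integers_intros)
  finally show ?thesis .
qed

text \<open>\<open>R/K\<close> has stable rank one: with \<open>e = a\<^sup>m\<close> idempotent modulo \<open>K\<close> and \<open>f = 1 - e\<close>, the element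
  \<open>a\<close> is a unit on the \<open>e\<close>-component and nilpotent on the \<open>f\<close>-component, where therefore
  \<open>a + y \<equiv> 1 + a(1 - b)\<close> is a unit; \<open>u\<close> inverts \<open>a + fy\<close> componentwise.\<close>

lemma stable_range_one_mod:
  assumes "K \<noteq> {0}"
    and a: "a \<in> ring_of_integers" and b: "b \<in> ring_of_integers" and y: "y \<in> ring_of_integers"
    and unimodular: "a * b + y - 1 \<in> K"
  obtains t u where "t \<in> ring_of_integers" "u \<in> ring_of_integers" "(a + t * y) * u - 1 \<in> K"
proof -
  obtain m where "m \<ge> 1" and idem: "a ^ m * a ^ m - a ^ m \<in> K"
    using power_idempotent_mod[OF assms(1) a] by blast
  define e where "e = a ^ m"
  define f where "f = 1 - e"
  define w where "w = a ^ (m - 1)"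
  define n where "n = f * a * (1 - b)"
  define g where "g = (\<Sum>i<m. (- n) ^ i)"
  define u where "u = w * e + f * g"
  have e: "e \<in> ring_of_integers" unfolding e_def using a by (intro ring_of_integers_intros)
  have f: "f \<in> ring_of_integers" unfolding f_def using e by (intro ring_of_integers_intros)
  have w: "w \<in> ring_of_integers" unfolding w_def using a by (intro ring_of_integers_intros)
  have n: "n \<in> ring_of_integers" unfolding n_def using f a b by (intro ring_of_integers_intros)
  have g: "g \<in> ring_of_integers"
    unfolding g_def using n by (intro ring_of_integers_sum) (auto intro: ring_of_integers_intros)
  have u: "u \<in> ring_of_integers" unfolding u_def using w e f g by (intro ring_of_integers_intros)
  have e_idem: "e * e - e \<in> K" using idem unfolding e_def .
  have f_idem: "f * f - f \<in> K"
  proof -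
    have "f * f - f = e * e - e" unfolding f_def by (simp add: algebra_simps)
    then show ?thesis using e_idem by simp
  qed
  have ef: "e * f \<in> K"
  proof -
    have "e * f = - (e * e - e)" unfolding f_def by (simp add: algebra_simps)
    then show ?thesis using integral_ideal_uminus[OF e_idem] by simp
  qed
  have f_power: "f ^ Suc j - f \<in> K" for j
  proof (induction j)
    case 0
    then show ?case using integral_ideal_0 by simp
  next
    case (Suc j)
    have "f ^ Suc (Suc j) - f = f * (f ^ Suc j - f) + (f * f - f)"
      by (simp add: algebra_simps)
    then show ?case
      using integral_ideal_add[OF integral_ideal_mult_left[OF f Suc] f_idem] by (simp only:)
  qed
  have "n ^ m = f ^ m * e * (1 - b) ^ m"
    unfolding n_def e_def by (simp only: power_mult_distrib)
  also have "\<dots> = ((f ^ m - f) * e + e * f) * (1 - b) ^ m"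
    by (simp add: algebra_simps)
  also have "\<dots> \<in> K"
  proof (rule integral_ideal_mult_right)
    have "f ^ m - f \<in> K"
      using f_power[of "m - 1"] \<open>m \<ge> 1\<close> by (cases m) auto
    then show "(f ^ m - f) * e + e * f \<in> K"
      by (intro integral_ideal_add ef integral_ideal_mult_right e)
    show "(1 - b) ^ m \<in> ring_of_integers" using b by (intro ring_of_integers_intros)
  qed
  finally have g_inverse: "(1 + n) * g - 1 \<in> K"
    unfolding g_def by (rule one_plus_nilpotent_invertible_mod)
  have "a * w = e"
    unfolding w_def e_def using \<open>m \<ge> 1\<close> by (simp flip: power_Suc)
  then have "(a + f * y) * u - 1 = (e * e - e) + (e * f) * ((1 - a * b) * w)
      + (a * b + y - 1) * (f * u) + (f * f - f) * ((1 - a * b) * g) + (e * f) * (a * (1 - b) * g)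
      + f * ((1 + n) * g - 1)"
    unfolding u_def n_def f_def by (simp add: algebra_simps)
  also have "\<dots> \<in> K"
  proof -
    have "(e * f) * ((1 - a * b) * w) \<in> K"
      using a b w by (intro integral_ideal_mult_right[OF ef] ring_of_integers_intros)
    moreover have "(a * b + y - 1) * (f * u) \<in> K"
      using f u by (intro integral_ideal_mult_right[OF unimodular] ring_of_integers_intros)
    moreover have "(f * f - f) * ((1 - a * b) * g) \<in> K"
      using a b g by (intro integral_ideal_mult_right[OF f_idem] ring_of_integers_intros)
    moreover have "(e * f) * (a * (1 - b) * g) \<in> K"
      using a b g by (intro integral_ideal_mult_right[OF ef] ring_of_integers_intros)
    moreover have "f * ((1 + n) * g - 1) \<in> K"
      using integral_ideal_mult_left[OF f g_inverse] .
    ultimately show ?thesis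
      using e_idem by (intro integral_ideal_add)
  qed
  finally show ?thesis using that f u by blast
qed

end

section \<open>Fractional ideals\<close>

lemma frac_ideal_add: "frac_ideal J \<Longrightarrow> a \<in> J \<Longrightarrow> b \<in> J \<Longrightarrow> a + b \<in> J"
  and frac_ideal_mult: "frac_ideal J \<Longrightarrow> r \<in> ring_of_integers \<Longrightarrow> a \<in> J \<Longrightarrow> r * a \<in> J"
  and frac_ideal_nonzero: "frac_ideal J \<Longrightarrow> \<exists>a\<in>J. a \<noteq> 0"
  unfolding frac_ideal_def by blast+

lemma frac_ideal_uminus: "frac_ideal J \<Longrightarrow> a \<in> J \<Longrightarrow> - a \<in> J"
  using frac_ideal_mult[OF _ ring_of_integers_of_int[of "-1"]] by simp

lemma frac_ideal_diff: "frac_ideal J \<Longrightarrow> a \<in> J \<Longrightarrow> b \<in> J \<Longrightarrow> a - b \<in> J"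
  using frac_ideal_add[OF _ _ frac_ideal_uminus] by simp

lemma ideal_prod_mult: "a \<in> A \<Longrightarrow> b \<in> B \<Longrightarrow> a * b \<in> ideal_prod A B"
  unfolding ideal_prod_def
  by (intro CollectI exI[of _ 1] exI[of _ "\<lambda>_. a"] exI[of _ "\<lambda>_. b"]) simp

lemma ideal_prod_0: "0 \<in> ideal_prod A B"
  unfolding ideal_prod_def by (auto intro!: exI[of _ 0])

lemma mult_ideal_prod_mem:
  assumes I: "integral_ideal I" and JJ: "ideal_prod J Jh \<subseteq> ring_of_integers"
    and x: "x \<in> J" and s: "s \<in> ideal_prod I Jh"
  shows "x * s \<in> I"
proof -
  obtain n :: nat and a b where ab: "\<And>i. i < n \<Longrightarrow> a i \<in> I \<and> b i \<in> Jh"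
    and s_def: "s = (\<Sum>i<n. a i * b i)"
    using s unfolding ideal_prod_def by blast
  have "x * s = (\<Sum>i<n. (x * b i) * a i)"
    unfolding s_def by (simp add: sum_distrib_left algebra_simps)
  also have "\<dots> \<in> I"
    using ab x JJ ideal_prod_mult[of x J _ Jh]
    by (intro integral_ideal_sum[OF I] integral_ideal_mult_left[OF I]) auto
  finally show ?thesis .
qed

lemma integral_ideal_scaled_frac_ideal:
  assumes J: "frac_ideal J" and JJ: "ideal_prod J Jh \<subseteq> ring_of_integers" and c: "c \<in> Jh"
  shows "integral_ideal ((*) c ` J)"
  unfolding integral_ideal_def
proof (intro conjI ballI subsetI)
  fix a assume "a \<in> (*) c ` J"
  then obtain v where v: "v \<in> J" and a: "a = c * v" by blast
  show "a \<in> ring_of_integers"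
    using JJ ideal_prod_mult[OF v c] unfolding a by (auto simp: mult.commute)
  show "r * a \<in> (*) c ` J" if "r \<in> ring_of_integers" for r
  proof
    show "r * a = c * (r * v)" unfolding a by (simp add: algebra_simps)
    show "r * v \<in> J" using frac_ideal_mult[OF J that v] .
  qed
  show "a + b \<in> (*) c ` J" if "b \<in> (*) c ` J" for b
  proof -
    from that obtain v' where v': "v' \<in> J" and b: "b = c * v'" by blast
    show ?thesis
    proof
      show "a + b = c * (v + v')" unfolding a b by (simp add: algebra_simps)
      show "v + v' \<in> J" using frac_ideal_add[OF J v v'] .
    qed
  qed
next
  have "0 \<in> J" using J unfolding frac_ideal_def by blast
  then show "0 \<in> (*) c ` J" by (rule rev_image_eqI) simp
qed

section \<open>Lifting from \<open>\<Gamma>_I(J,Jh)\<close> to \<open>\<Gamma>(J,Jh)\<close>\<close>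

lemma nonzero_lift_mod_ideal_prod:
  assumes "nz_ideal I" and Jh: "frac_ideal Jh" and b: "b \<in> Jh"
  obtains c where "c \<in> Jh" "c \<noteq> 0" "c - b \<in> ideal_prod I Jh"
proof (cases "b = 0")
  case False
  then show ?thesis using that[of b] b ideal_prod_0[of I Jh] by simp
next
  case True
  obtain i where i: "i \<in> I" "i \<noteq> 0" using assms(1) unfolding nz_ideal_def by blast
  obtain h where h: "h \<in> Jh" "h \<noteq> 0" using frac_ideal_nonzero[OF Jh] by blast
  have "i \<in> ring_of_integers" using assms(1) i unfolding nz_ideal_def by blast
  then show ?thesis
    using that[of "i * h"] True i h frac_ideal_mult[OF Jh] ideal_prod_mult[of i I h Jh] by simp
qed

lemma lift_unimodular_first_column:
  assumes J: "frac_ideal J" and JJ: "ideal_prod J Jh \<subseteq> ring_of_integers" and I: "integral_ideal I"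
    and b11: "b11 \<in> ring_of_integers" and b22: "b22 \<in> ring_of_integers" and b12: "b12 \<in> J"
    and c: "c \<in> Jh" "c \<noteq> 0" and det: "b11 * b22 - b12 * c - 1 \<in> I"
  obtains a11 u v where "a11 \<in> ring_of_integers" "u \<in> ring_of_integers" "v \<in> J"
    "a11 * u - c * v = 1" "a11 - b11 \<in> I" "a11 * b22 - b12 * c - 1 \<in> I"
proof -
  define \<delta> where "\<delta> = b11 * b22 - b12 * c - 1"
  have \<delta>_I: "\<delta> \<in> I" using det unfolding \<delta>_def .
  have \<delta>: "\<delta> \<in> ring_of_integers" using integral_ideal_subset[OF I \<delta>_I] .
  define K where "K = (*) c ` J"
  have K: "integral_ideal K"
    unfolding K_def using integral_ideal_scaled_frac_ideal[OF J JJ c(1)] .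
  have "K \<noteq> {0}"
  proof -
    obtain v where "v \<in> J" "v \<noteq> 0" using frac_ideal_nonzero[OF J] by blast
    then have "c * v \<in> K" "c * v \<noteq> 0" using c(2) unfolding K_def by auto
    then show ?thesis by blast
  qed
  moreover have "b11 * b22 + (- \<delta>) - 1 \<in> K"
  proof -
    have "b11 * b22 + (- \<delta>) - 1 = c * b12" unfolding \<delta>_def by (simp add: algebra_simps)
    then show ?thesis unfolding K_def using b12 by blast
  qed
  ultimately obtain t u where t: "t \<in> ring_of_integers" and u: "u \<in> ring_of_integers"
    and "(b11 + t * (- \<delta>)) * u - 1 \<in> K"
    using stable_range_one_mod[OF K _ b11 b22 ring_of_integers_uminus[OF \<delta>]] by blast
  then obtain v where v: "v \<in> J" and unimodular: "(b11 - t * \<delta>) * u - 1 = c * v"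
    unfolding K_def by auto
  have "b11 - t * \<delta> \<in> ring_of_integers"
    using b11 t \<delta> by (intro ring_of_integers_intros)
  moreover have "(b11 - t * \<delta>) * u - c * v = 1"
    using unimodular by (simp add: algebra_simps)
  moreover have "(b11 - t * \<delta>) - b11 = (- t) * \<delta>"
    by simp
  then have "(b11 - t * \<delta>) - b11 \<in> I"
    using integral_ideal_mult_left[OF I ring_of_integers_uminus[OF t] \<delta>_I] by (simp only:)
  moreover have "(b11 - t * \<delta>) * b22 - b12 * c - 1 = (1 - t * b22) * \<delta>"
    unfolding \<delta>_def by (simp add: algebra_simps)
  then have "(b11 - t * \<delta>) * b22 - b12 * c - 1 \<in> I"
    using integral_ideal_mult_left[OF I _ \<delta>_I] t b22 by (simp add: ring_of_integers_intros)
  ultimately show ?thesis using that u v by blast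
qed

text \<open>The completion: \<open>s = ub\<^sub>1\<^sub>2 - vb\<^sub>2\<^sub>2\<close>, \<open>a\<^sub>1\<^sub>2 = a\<^sub>1\<^sub>1s + v\<close>, \<open>a\<^sub>2\<^sub>2 = cs + u\<close> has determinant
  \<open>a\<^sub>1\<^sub>1u - cv = 1\<close>, and its second column differs from \<open>(b\<^sub>1\<^sub>2, b\<^sub>2\<^sub>2)\<close> by
  \<open>-(a\<^sub>1\<^sub>1b\<^sub>2\<^sub>2 - b\<^sub>1\<^sub>2c - 1)(v, u)\<close>.\<close>

lemma complete_unimodular_first_column:
  assumes J: "frac_ideal J" and JJ: "ideal_prod J Jh \<subseteq> ring_of_integers" and I: "integral_ideal I"
    and a11: "a11 \<in> ring_of_integers" and c: "c \<in> Jh"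
    and u: "u \<in> ring_of_integers" and v: "v \<in> J" and unimodular: "a11 * u - c * v = 1"
    and b12: "b12 \<in> J" and b22: "b22 \<in> ring_of_integers" and det: "a11 * b22 - b12 * c - 1 \<in> I"
  obtains a12 a22 where "(a11, a12, c, a22) \<in> Gamma J Jh"
    "a12 - b12 \<in> ideal_prod I J" "a22 - b22 \<in> I"
proof -
  define s where "s = u * b12 - v * b22"
  define a12 where "a12 = a11 * s + v"
  define a22 where "a22 = c * s + u"
  have s: "s \<in> J"
    using frac_ideal_diff[OF J frac_ideal_mult[OF J u b12] frac_ideal_mult[OF J b22 v]]
    unfolding s_def by (simp add: mult.commute)
  have cs: "c * s \<in> ring_of_integers"
    using JJ ideal_prod_mult[OF s c] by (auto simp: mult.commute)
  have "a11 * a22 - a12 * c = 1"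
    using unimodular unfolding a22_def a12_def by (simp add: algebra_simps)
  then have "(a11, a12, c, a22) \<in> Gamma J Jh"
    unfolding Gamma_def a12_def a22_def
    using a11 c cs u frac_ideal_add[OF J frac_ideal_mult[OF J a11 s] v]
    by (simp add: mult.commute ring_of_integers_intros)
  moreover have "a12 - b12 = (a11 * b22 - b12 * c - 1) * (- v)"
  proof -
    have "a12 - b12 - (a11 * b22 - b12 * c - 1) * (- v) = b12 * (a11 * u - c * v - 1)"
      unfolding a12_def s_def by (simp add: algebra_simps)
    also have "\<dots> = 0" using unimodular by simp
    finally show ?thesis by (simp only: right_minus_eq)
  qed
  moreover have "a22 - b22 = (a11 * b22 - b12 * c - 1) * (- u)"
  proof -
    have "a22 - b22 - (a11 * b22 - b12 * c - 1) * (- u) = b22 * (a11 * u - c * v - 1)"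
      unfolding a22_def s_def by (simp add: algebra_simps)
    also have "\<dots> = 0" using unimodular by simp
    finally show ?thesis by (simp only: right_minus_eq)
  qed
  ultimately show ?thesis
    using that ideal_prod_mult[OF det frac_ideal_uminus[OF J v]]
      integral_ideal_mult_right[OF I det ring_of_integers_uminus[OF u]]
    by (simp only:)
qed

theorem lemma7p4:
  fixes I J Jh :: "'a::field_char_0 set"
  assumes "number_field TYPE('a)" and "totally_real TYPE('a)"
    and "frac_ideal J" and "frac_ideal Jh"
    and "ideal_prod J Jh \<subseteq> ring_of_integers"
    and "nz_ideal I"
    and "I \<subseteq> ideal_prod J Jh"
  shows "\<forall>B \<in> Gammabar_reps I J Jh. \<exists>A \<in> Gamma J Jh. red_eq I J Jh A B"
proof
  have J: "frac_ideal J" and Jh: "frac_ideal Jh" and JJ: "ideal_prod J Jh \<subseteq> ring_of_integers"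
    and nz_I: "nz_ideal I" and I: "integral_ideal I"
    using assms by (simp_all add: nz_ideal_iff)
  fix B assume "B \<in> Gammabar_reps I J Jh"
  then obtain b11 b12 b21 b22 where B: "B = (b11, b12, b21, b22)"
    and b11: "b11 \<in> ring_of_integers" and b22: "b22 \<in> ring_of_integers"
    and b12: "b12 \<in> J" and b21: "b21 \<in> Jh" and det: "b11 * b22 - b12 * b21 - 1 \<in> I"
    unfolding Gammabar_reps_def by auto
  obtain c where c: "c \<in> Jh" "c \<noteq> 0" and c_b21: "c - b21 \<in> ideal_prod I Jh"
    using nonzero_lift_mod_ideal_prod[OF nz_I Jh b21] by blast
  have "b11 * b22 - b12 * c - 1 = (b11 * b22 - b12 * b21 - 1) - b12 * (c - b21)"
    by (simp add: algebra_simps)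
  also have "\<dots> \<in> I"
    using integral_ideal_diff[OF I det mult_ideal_prod_mem[OF I JJ b12 c_b21]] .
  finally have "b11 * b22 - b12 * c - 1 \<in> I" .
  then obtain a11 u v where a11: "a11 \<in> ring_of_integers" "a11 - b11 \<in> I"
    and uv: "u \<in> ring_of_integers" "v \<in> J" "a11 * u - c * v = 1"
    and det': "a11 * b22 - b12 * c - 1 \<in> I"
    using lift_unimodular_first_column[OF J JJ I b11 b22 b12 c] by blast
  obtain a12 a22 where "(a11, a12, c, a22) \<in> Gamma J Jh"
    and "a12 - b12 \<in> ideal_prod I J" "a22 - b22 \<in> I"
    using complete_unimodular_first_column[OF J JJ I a11(1) c(1) uv b12 b22 det'] by blast
  then show "\<exists>A \<in> Gamma J Jh. red_eq I J Jh A B"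
    using a11(2) c_b21 unfolding red_eq_def B by blast
qed

end
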